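(* Let $\Sigma_1\subset E(1,1)$ be a regular surface and $\gamma=(\gamma_1,\gamma_2,\gamma_3):[a,b]\to\Sigma_1$ a Euclidean $C^2$-smooth regular curve; let $t\in[a,b]$ be such that $\gamma(t)$ is non-characteristic, with $\bar p,\bar q$ evaluated at $\gamma(t)$. Set $B=-e^{-\gamma_3}\dot\gamma_1+e^{\gamma_3}\dot\gamma_2$ and $\omega(\dot\gamma(t))=-\frac{\sqrt2}{2}(e^{-\gamma_3}\dot\gamma_1+e^{\gamma_3}\dot\gamma_2)$. (i) If $\omega(\dot\gamma(t))\ne0$, then $k^{\infty,s}_{\gamma,\Sigma_1}=\lim_{L\to+\infty}k^{L,s}_{\gamma,\Sigma_1}$ exists and equals $\dfrac{\bar p\dot\gamma_3+\frac{\sqrt2}{2}\bar q B}{|\omega(\dot\gamma(t))|}$. (ii) If $\omega(\dot\gamma(t))=0$ and $\frac{d}{dt}\omega(\dot\gamma(t))=0$, then $k^{\infty,s}_{\gamma,\Sigma_1}=0$. (iii) If $\omega(\dot\gamma(t))=0$ and $\frac{d}{dt}\omega(\dot\gamma(t))\ne0$, then $$\lim_{L\to+\infty}\frac{k^{L,s}_{\gamma,\Sigma_1}}{\sqrt L}=\frac{\big(-\bar q\dot\gamma_3+\frac{\sqrt2}{2}\bar pB\big)\frac{d}{dt}\omega(\dot\gamma(t))}{\big|\bar q\dot\gamma_3-\frac{\sqrt2}{2}\bar pB\big|^3}.$$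
   Context: $E(1,1)$ is modelled on $\mathbb R^3$ with coordinates $(x_1,x_2,x_3)$ and vector fields $X_1=\partial_{x_3}$, $X_2=\frac{1}{\sqrt2}(-e^{x_3}\partial_{x_1}+e^{-x_3}\partial_{x_2})$, $X_3=-\frac1{\sqrt2}(e^{x_3}\partial_{x_1}+e^{-x_3}\partial_{x_2})$, dual forms $\omega_1=dx_3$, $\omega_2=\frac1{\sqrt2}(-e^{-x_3}dx_1+e^{x_3}dx_2)$, $\omega=-\frac1{\sqrt2}(e^{-x_3}dx_1+e^{x_3}dx_2)$. For $L>0$, $g_L=\omega_1\otimes\omega_1+\omega_2\otimes\omega_2+L\,\omega\otimes\omega$ (so $X_1,X_2,\widetilde X_3:=L^{-1/2}X_3$ is orthonormal) with Levi-Civita connection $\nabla^L$. A regular surface is a Euclidean $C^2$-smooth compact oriented surface $\Sigma_1=\{u=0\}$, $u$ Euclidean $C^2$ with nonvanishing Euclidean gradient. Put $p=X_1u$, $q=X_2u$, $r=\widetilde X_3u$, $l=\sqrt{p^2+q^2}$, $l_L=\sqrt{p^2+q^2+r^2}$, $\bar p=p/l$, $\bar q=q/l$, $\bar r_L=r/l_L$; non-characteristic means $l\ne0$. There $e_1=\bar qX_1-\bar pX_2$, $e_2=\bar r_L\bar pX_1+\bar r_L\bar qX_2-\frac l{l_L}\widetilde X_3$ is an orthonormal tangent frame of $\Sigma_1$, and $J_L$ is the linear map on $T\Sigma_1$ with $J_L(e_1)=e_2$, $J_L(e_2)=-e_1$. $\nabla^{\Sigma_1,L}_UV$ is the $g_L$-orthogonal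 projection of $\nabla^L_UV$ onto $T\Sigma_1$. The signed geodesic curvature is $k^{L,s}_{\gamma,\Sigma_1}=\langle\nabla^{\Sigma_1,L}_{\dot\gamma}\dot\gamma,J_L(\dot\gamma)\rangle_L/\|\dot\gamma\|_L^3$, and $k^{\infty,s}_{\gamma,\Sigma_1}:=\lim_{L\to+\infty}k^{L,s}_{\gamma,\Sigma_1}$ when it exists. *)

theory Defs
  imports "HOL-Analysis.Analysis"
begin

text \<open>Model of E(1,1) on real^3; coordinates x$1, x$2, x$3.\<close>

type_synonym pt = "real ^ 3"

definition X1 :: "pt \<Rightarrow> pt" where
  "X1 x = vector [0, 0, 1]"
definition X2 :: "pt \<Rightarrow> pt" where
  "X2 x = (1 / sqrt 2) *\<^sub>R vector [- exp (x$3), exp (- x$3), 0]"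
definition X3 :: "pt \<Rightarrow> pt" where
  "X3 x = (- 1 / sqrt 2) *\<^sub>R vector [exp (x$3), exp (- x$3), 0]"

definition om1 :: "pt \<Rightarrow> pt \<Rightarrow> real" where
  "om1 x v = v$3"
definition om2 :: "pt \<Rightarrow> pt \<Rightarrow> real" where
  "om2 x v = (1 / sqrt 2) * (- exp (- x$3) * v$1 + exp (x$3) * v$2)"
definition om :: "pt \<Rightarrow> pt \<Rightarrow> real" where
  "om x v = (- 1 / sqrt 2) * (exp (- x$3) * v$1 + exp (x$3) * v$2)"

definition gL :: "real \<Rightarrow> pt \<Rightarrow> pt \<Rightarrow> pt \<Rightarrow> real" where
  "gL L x v w = om1 x v * om1 x w + om2 x v * om2 x w + L * om x v * om x w"

text \<open>The g_L-orthonormal frame X1, X2, X3~ = L^(-1/2) X3, indexed 1,2,3.\<close>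
definition EL :: "real \<Rightarrow> nat \<Rightarrow> pt \<Rightarrow> pt" where
  "EL L i x = (if i = 1 then X1 x else if i = 2 then X2 x else (1 / sqrt L) *\<^sub>R X3 x)"

definition lie :: "(pt \<Rightarrow> pt) \<Rightarrow> (pt \<Rightarrow> pt) \<Rightarrow> pt \<Rightarrow> pt" where
  "lie X Y x = frechet_derivative Y (at x) (X x) - frechet_derivative X (at x) (Y x)"

text \<open>Levi-Civita connection coefficients g_L(nabla_{E_i} E_j, E_k) via the Koszul formula
  for an orthonormal frame.\<close>
definition strc :: "real \<Rightarrow> nat \<Rightarrow> nat \<Rightarrow> nat \<Rightarrow> pt \<Rightarrow> real" where
  "strc L i j k x = gL L x (lie (EL L i) (EL L j) x) (EL L k x)"
definition Gam :: "real \<Rightarrow> nat \<Rightarrow> nat \<Rightarrow> nat \<Rightarrow> pt \<Rightarrow> real" where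
  "Gam L i j k x = (strc L i j k x - strc L i k j x - strc L j k i x) / 2"

definition vel :: "(real \<Rightarrow> pt) \<Rightarrow> real \<Rightarrow> real \<Rightarrow> real \<Rightarrow> pt" where
  "vel \<gamma> a b s = vector_derivative \<gamma> (at s within {a..b})"

definition coef :: "real \<Rightarrow> (real \<Rightarrow> pt) \<Rightarrow> real \<Rightarrow> real \<Rightarrow> nat \<Rightarrow> real \<Rightarrow> real" where
  "coef L \<gamma> a b k s = gL L (\<gamma> s) (vel \<gamma> a b s) (EL L k (\<gamma> s))"

definition covacc :: "real \<Rightarrow> (real \<Rightarrow> pt) \<Rightarrow> real \<Rightarrow> real \<Rightarrow> real \<Rightarrow> pt" where
  "covacc L \<gamma> a b t = (\<Sum>k\<in>{1..3::nat}.
     (vector_derivative (coef L \<gamma> a b k) (at t within {a..b})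
      + (\<Sum>i\<in>{1..3::nat}. \<Sum>j\<in>{1..3::nat}.
           coef L \<gamma> a b i t * coef L \<gamma> a b j t * Gam L i j k (\<gamma> t)))
     *\<^sub>R EL L k (\<gamma> t))"

text \<open>Surface quantities for Sigma_1 = {u = 0}.\<close>
definition pf :: "(pt \<Rightarrow> real) \<Rightarrow> pt \<Rightarrow> real" where
  "pf u x = frechet_derivative u (at x) (X1 x)"
definition qf :: "(pt \<Rightarrow> real) \<Rightarrow> pt \<Rightarrow> real" where
  "qf u x = frechet_derivative u (at x) (X2 x)"
definition rf :: "real \<Rightarrow> (pt \<Rightarrow> real) \<Rightarrow> pt \<Rightarrow> real" where
  "rf L u x = frechet_derivative u (at x) ((1 / sqrt L) *\<^sub>R X3 x)"
definition lf :: "(pt \<Rightarrow> real) \<Rightarrow> pt \<Rightarrow> real" where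
  "lf u x = sqrt ((pf u x)\<^sup>2 + (qf u x)\<^sup>2)"
definition lLf :: "real \<Rightarrow> (pt \<Rightarrow> real) \<Rightarrow> pt \<Rightarrow> real" where
  "lLf L u x = sqrt ((pf u x)\<^sup>2 + (qf u x)\<^sup>2 + (rf L u x)\<^sup>2)"
definition pbar :: "(pt \<Rightarrow> real) \<Rightarrow> pt \<Rightarrow> real" where
  "pbar u x = pf u x / lf u x"
definition qbar :: "(pt \<Rightarrow> real) \<Rightarrow> pt \<Rightarrow> real" where
  "qbar u x = qf u x / lf u x"
definition rbarL :: "real \<Rightarrow> (pt \<Rightarrow> real) \<Rightarrow> pt \<Rightarrow> real" where
  "rbarL L u x = rf L u x / lLf L u x"

definition e1 :: "(pt \<Rightarrow> real) \<Rightarrow> pt \<Rightarrow> pt" where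
  "e1 u x = qbar u x *\<^sub>R X1 x - pbar u x *\<^sub>R X2 x"
definition e2 :: "real \<Rightarrow> (pt \<Rightarrow> real) \<Rightarrow> pt \<Rightarrow> pt" where
  "e2 L u x = (rbarL L u x * pbar u x) *\<^sub>R X1 x + (rbarL L u x * qbar u x) *\<^sub>R X2 x
              - (lf u x / lLf L u x) *\<^sub>R ((1 / sqrt L) *\<^sub>R X3 x)"

text \<open>g_L-orthogonal projection onto T Sigma_1 (spanned by the orthonormal e1, e2) and J_L.\<close>
definition projT :: "real \<Rightarrow> (pt \<Rightarrow> real) \<Rightarrow> pt \<Rightarrow> pt \<Rightarrow> pt" where
  "projT L u x V = gL L x V (e1 u x) *\<^sub>R e1 u x + gL L x V (e2 L u x) *\<^sub>R e2 L u x"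
definition JL :: "real \<Rightarrow> (pt \<Rightarrow> real) \<Rightarrow> pt \<Rightarrow> pt \<Rightarrow> pt" where
  "JL L u x v = gL L x v (e1 u x) *\<^sub>R e2 L u x - gL L x v (e2 L u x) *\<^sub>R e1 u x"

definition kLs :: "real \<Rightarrow> (pt \<Rightarrow> real) \<Rightarrow> (real \<Rightarrow> pt) \<Rightarrow> real \<Rightarrow> real \<Rightarrow> real \<Rightarrow> real" where
  "kLs L u \<gamma> a b t =
     gL L (\<gamma> t) (projT L u (\<gamma> t) (covacc L \<gamma> a b t)) (JL L u (\<gamma> t) (vel \<gamma> a b t))
     / (sqrt (gL L (\<gamma> t) (vel \<gamma> a b t) (vel \<gamma> a b t))) ^ 3"

definition egrad :: "(pt \<Rightarrow> real) \<Rightarrow> pt \<Rightarrow> pt" where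
  "egrad u x = (\<chi> i. frechet_derivative u (at x) (axis i 1))"

definition C2_fun :: "(pt \<Rightarrow> real) \<Rightarrow> bool" where
  "C2_fun u \<longleftrightarrow> (\<forall>x. u differentiable (at x)) \<and> (\<forall>x. egrad u differentiable (at x))
     \<and> (\<forall>j. continuous_on UNIV (\<lambda>y. frechet_derivative (egrad u) (at y) (axis j 1)))"

definition C2_curve :: "(real \<Rightarrow> pt) \<Rightarrow> real \<Rightarrow> real \<Rightarrow> bool" where
  "C2_curve \<gamma> a b \<longleftrightarrow> (\<exists>d1 d2. (\<forall>s\<in>{a..b}.
       (\<gamma> has_vector_derivative d1 s) (at s within {a..b})
     \<and> (d1 has_vector_derivative d2 s) (at s within {a..b}))
     \<and> continuous_on {a..b} d2)"

end

(*
  In the g_L-orthonormal frame X1, X2, L^(-1/2) X3 the signed geodesic curvature of gamma is the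
  triple product N . (v x V) / |v|^3 of the unit normal N, the velocity v and the covariant
  acceleration V, all in frame coordinates. Writing a_i for the coframe components of gamma'
  (so a3 = omega(gamma')), d_i for their derivatives and w for the derivative of a3, one has
  v = (a1, a2, sqrt L a3) and, by the Christoffel symbols of the frame,
    V = (d1 + (L + 1) a2 a3, d2 - L a1 a3, sqrt L w - a1 a2 / sqrt L),
  while N tends to (pbar, qbar, 0). The quotient is unchanged under (v, V) |-> (c v, c^2 V).
  If a3 <> 0, the choice c = L^(-1/2) makes v and V converge to (0, 0, a3) and (a2 a3, - a1 a3, 0).
  If a3 = 0, v is constant: V / sqrt L tends to (0, 0, w), and when w = 0 already V tends to a
  horizontal vector, which is orthogonal to N x v in the limit. Each case is then the continuity
  of (N, v, V) |-> N . (v x V) / |v|^3 at a point with v <> 0; in the last one the tangency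
  pbar a1 + qbar a2 = 0 turns |v| into |qbar a1 - pbar a2|.
*)
theory Submission
  imports Defs
begin

unbundle cross3_syntax

lemma norm_vector_3: "norm (vector [x, y, z] :: real ^ 3) = sqrt (x\<^sup>2 + y\<^sup>2 + z\<^sup>2)"
  by (simp add: norm_eq_sqrt_inner inner_vec_def sum_3 power2_eq_square)

lemma inner_cross_cross:
  fixes a b c d :: "real ^ 3"
  shows "(a \<times> b) \<bullet> (c \<times> d) = (a \<bullet> c) * (b \<bullet> d) - (a \<bullet> d) * (b \<bullet> c)"
  by (simp add: cross3_simps)

lemma inner_projection_rotation:
  fixes E1 E2 V v :: "real ^ 3"
  assumes "E1 \<bullet> E1 = 1" "E2 \<bullet> E2 = 1" "E1 \<bullet> E2 = 0"
  shows "((V \<bullet> E1) *\<^sub>R E1 + (V \<bullet> E2) *\<^sub>R E2) \<bullet> ((v \<bullet> E1) *\<^sub>R E2 - (v \<bullet> E2) *\<^sub>R E1)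
     = (E1 \<times> E2) \<bullet> (v \<times> V)"
  using assms by (simp add: inner_cross_cross inner_commute algebra_simps)

lemma triple_product_over_cube_scale:
  fixes n v V :: "real ^ 3"
  assumes "c > 0"
  shows "n \<bullet> ((c *\<^sub>R v) \<times> (c\<^sup>2 *\<^sub>R V)) / norm (c *\<^sub>R v) ^ 3 = n \<bullet> (v \<times> V) / norm v ^ 3"
  using assms by (simp add: cross_mult_left cross_mult_right power_mult_distrib power2_eq_square
      power3_eq_cube)

lemma tendsto_vector3:
  assumes "(f \<longlongrightarrow> a) F" "(g \<longlongrightarrow> b) F" "(h \<longlongrightarrow> c) F"
  shows "((\<lambda>x. vector [f x, g x, h x] :: real ^ 3) \<longlongrightarrow> vector [a, b, c]) F"
proof (rule vec_tendstoI)
  fix i :: 3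
  have "i = 1 \<or> i = 2 \<or> i = 3"
    by (rule exhaust_3)
  then show "((\<lambda>x. vector [f x, g x, h x] $ i) \<longlongrightarrow> vector [a, b, c] $ i) F"
    using assms by auto
qed

lemma tendsto_triple_product_over_cube:
  fixes n v V :: "'a \<Rightarrow> real ^ 3"
  assumes "(n \<longlongrightarrow> n0) F" "(v \<longlongrightarrow> v0) F" "(V \<longlongrightarrow> V0) F" "v0 \<noteq> 0"
  shows "((\<lambda>x. n x \<bullet> (v x \<times> V x) / norm (v x) ^ 3)
    \<longlongrightarrow> n0 \<bullet> (v0 \<times> V0) / norm v0 ^ 3) F"
  using assms bounded_bilinear.tendsto[OF bilinear_cross[unfolded bilinear_conv_bounded_bilinear]]
  by (intro tendsto_intros) auto

lemma tendsto_inverse_sqrt_at_top: "((\<lambda>L::real. 1 / sqrt L) \<longlongrightarrow> 0) at_top"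
  by (rule tendsto_divide_0[OF tendsto_const filterlim_at_top_imp_at_infinity[OF sqrt_at_top]])

section \<open>The frame of E(1,1) and its Christoffel symbols\<close>

lemma coframe_frame [simp]:
  "om1 x (X1 x) = 1" "om2 x (X1 x) = 0" "om x (X1 x) = 0"
  "om1 x (X2 x) = 0" "om2 x (X2 x) = 1" "om x (X2 x) = 0"
  "om1 x (X3 x) = 0" "om2 x (X3 x) = 0" "om x (X3 x) = 1"
  by (simp_all add: om1_def om2_def om_def X1_def X2_def X3_def field_simps exp_minus)

lemma coframe_linear [simp]:
  "om1 x (v + w) = om1 x v + om1 x w" "om2 x (v + w) = om2 x v + om2 x w"
  "om x (v + w) = om x v + om x w"
  "om1 x (v - w) = om1 x v - om1 x w" "om2 x (v - w) = om2 x v - om2 x w"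
  "om x (v - w) = om x v - om x w"
  "om1 x (c *\<^sub>R v) = c * om1 x v" "om2 x (c *\<^sub>R v) = c * om2 x v" "om x (c *\<^sub>R v) = c * om x v"
  "om1 x 0 = 0" "om2 x 0 = 0" "om x 0 = 0"
  "om1 x (- v) = - om1 x v" "om2 x (- v) = - om2 x v" "om x (- v) = - om x v"
  by (simp_all add: om1_def om2_def om_def algebra_simps)

lemma frame_component_3 [simp]: "X1 x $ 3 = 1" "X2 x $ 3 = 0" "X3 x $ 3 = 0"
  by (simp_all add: X1_def X2_def X3_def)

lemma frame_decomposition: "v = om1 x v *\<^sub>R X1 x + om2 x v *\<^sub>R X2 x + om x v *\<^sub>R X3 x"
  by (simp add: vec_eq_iff forall_3 om1_def om2_def om_def X1_def X2_def X3_def field_simps exp_minus)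

lemma coframe_eq_0_imp_eq_0: "om1 x v = 0 \<Longrightarrow> om2 x v = 0 \<Longrightarrow> om x v = 0 \<Longrightarrow> v = 0"
  by (subst frame_decomposition[of v x]) simp

lemma has_derivative_x3: "((\<lambda>y::pt. y$3) has_derivative (\<lambda>h. h$3)) (at x)"
  by (rule bounded_linear_imp_has_derivative[OF bounded_linear_vec_nth])

lemma X2_has_derivative: "(X2 has_derivative (\<lambda>h. h$3 *\<^sub>R X3 x)) (at x)"
proof -
  have eq: "X2 = (\<lambda>y. (- exp (y$3) / sqrt 2) *\<^sub>R axis 1 1 + (exp (- y$3) / sqrt 2) *\<^sub>R axis 2 1)"
    by (auto simp: fun_eq_iff vec_eq_iff forall_3 X2_def axis_def)
  show ?thesis
    unfolding eq by (rule has_derivative_eq_rhs)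
      (auto intro!: derivative_eq_intros has_derivative_x3
        simp: X3_def vec_eq_iff forall_3 axis_def field_simps)
qed

lemma X3_has_derivative: "(X3 has_derivative (\<lambda>h. h$3 *\<^sub>R X2 x)) (at x)"
proof -
  have eq: "X3 = (\<lambda>y. (- exp (y$3) / sqrt 2) *\<^sub>R axis 1 1 + (- exp (- y$3) / sqrt 2) *\<^sub>R axis 2 1)"
    by (auto simp: fun_eq_iff vec_eq_iff forall_3 X3_def axis_def)
  show ?thesis
    unfolding eq by (rule has_derivative_eq_rhs)
      (auto intro!: derivative_eq_intros has_derivative_x3
        simp: X2_def vec_eq_iff forall_3 axis_def field_simps)
qed

definition EL_dx3 :: "real \<Rightarrow> nat \<Rightarrow> pt \<Rightarrow> pt" where
  "EL_dx3 L j x = (if j = 1 then 0 else if j = 2 then X3 x else (1 / sqrt L) *\<^sub>R X2 x)"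

lemma EL_has_derivative: "(EL L j has_derivative (\<lambda>h. h$3 *\<^sub>R EL_dx3 L j x)) (at x)"
proof -
  have "EL L j = (if j = 1 then (\<lambda>_. vector [0, 0, 1]) else if j = 2 then X2
      else (\<lambda>x. (1 / sqrt L) *\<^sub>R X3 x))"
    by (auto simp: fun_eq_iff EL_def X1_def)
  then show ?thesis
    by (auto simp: EL_dx3_def X2_has_derivative
        intro: has_derivative_eq_rhs[OF has_derivative_scaleR_right[OF X3_has_derivative]])
qed

lemma lie_EL:
  "lie (EL L i) (EL L j) x = (EL L i x)$3 *\<^sub>R EL_dx3 L j x - (EL L j x)$3 *\<^sub>R EL_dx3 L i x"
  by (simp add: lie_def frechet_derivative_at[OF EL_has_derivative, symmetric])

lemma atLeastAtMost_1_3: "{1..3::nat} = {1, 2, 3}"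
  by auto

lemma christoffel_contraction:
  assumes "L > 0"
  shows "(\<Sum>i\<in>{1..3}. \<Sum>j\<in>{1..3}. c i * c j * Gam L i j 1 x) = c 2 * c 3 * (sqrt L + 1 / sqrt L)"
    and "(\<Sum>i\<in>{1..3}. \<Sum>j\<in>{1..3}. c i * c j * Gam L i j 2 x) = - c 1 * c 3 * sqrt L"
    and "(\<Sum>i\<in>{1..3}. \<Sum>j\<in>{1..3}. c i * c j * Gam L i j 3 x) = - c 1 * c 2 / sqrt L"
  using assms unfolding atLeastAtMost_1_3
  by (simp_all add: Gam_def strc_def lie_EL EL_dx3_def EL_def gL_def field_simps)

section \<open>Geodesic curvature as a triple product\<close>

definition frame_coords :: "real \<Rightarrow> pt \<Rightarrow> pt \<Rightarrow> real ^ 3" where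
  "frame_coords L x V = vector [om1 x V, om2 x V, sqrt L * om x V]"

lemma gL_eq_inner_frame_coords:
  "L \<ge> 0 \<Longrightarrow> gL L x V W = frame_coords L x V \<bullet> frame_coords L x W"
  by (simp add: gL_def frame_coords_def inner_vec_def sum_3)

lemma linear_frame_coords: "linear (frame_coords L x)"
  by (rule linearI) (simp_all add: frame_coords_def vec_eq_iff forall_3 algebra_simps)

lemma frame_coords_EL:
  assumes "L > 0"
  shows "frame_coords L x (EL L k x)
    = (if k = 1 then vector [1, 0, 0] else if k = 2 then vector [0, 1, 0] else vector [0, 0, 1])"
  using assms by (simp add: frame_coords_def EL_def)

lemma coef_EL:
  assumes "L > 0"
  shows "coef L \<gamma> a b 1 = (\<lambda>s. om1 (\<gamma> s) (vel \<gamma> a b s))"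
    and "coef L \<gamma> a b 2 = (\<lambda>s. om2 (\<gamma> s) (vel \<gamma> a b s))"
    and "coef L \<gamma> a b 3 = (\<lambda>s. sqrt L * om (\<gamma> s) (vel \<gamma> a b s))"
  using assms by (simp_all add: fun_eq_iff coef_def gL_def EL_def field_simps)

lemma covacc_frame_coords:
  assumes "L > 0" "a < b" "t \<in> {a..b}"
    and w: "((\<lambda>s. om (\<gamma> s) (vel \<gamma> a b s)) has_vector_derivative w) (at t within {a..b})"
  defines "a1 \<equiv> om1 (\<gamma> t) (vel \<gamma> a b t)" and "a2 \<equiv> om2 (\<gamma> t) (vel \<gamma> a b t)"
    and "a3 \<equiv> om (\<gamma> t) (vel \<gamma> a b t)"
    and "d1 \<equiv> vector_derivative (\<lambda>s. om1 (\<gamma> s) (vel \<gamma> a b s)) (at t within {a..b})"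
    and "d2 \<equiv> vector_derivative (\<lambda>s. om2 (\<gamma> s) (vel \<gamma> a b s)) (at t within {a..b})"
  shows "frame_coords L (\<gamma> t) (covacc L \<gamma> a b t)
    = vector [d1 + (L + 1) * a2 * a3, d2 - L * a1 * a3, sqrt L * w - a1 * a2 / sqrt L]"
proof -
  define D where "D k = vector_derivative (coef L \<gamma> a b k) (at t within {a..b})" for k
  define N where "N k = (\<Sum>i\<in>{1..3}. \<Sum>j\<in>{1..3}.
      coef L \<gamma> a b i t * coef L \<gamma> a b j t * Gam L i j k (\<gamma> t))" for k
  have D: "D 1 = d1" "D 2 = d2" "D 3 = sqrt L * w"
    unfolding D_def d1_def d2_def coef_EL[OF assms(1)]
    by (simp_all add: vector_derivative_within_closed_interval[OF assms(2,3)]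
        has_vector_derivative_mult_right[OF w])
  have c: "coef L \<gamma> a b 1 t = a1" "coef L \<gamma> a b 2 t = a2" "coef L \<gamma> a b 3 t = sqrt L * a3"
    unfolding coef_EL[OF assms(1)] a1_def a2_def a3_def by simp_all
  have N: "N 1 = (L + 1) * a2 * a3" "N 2 = - L * a1 * a3" "N 3 = - a1 * a2 / sqrt L"
    unfolding N_def christoffel_contraction[OF assms(1)] c
    using assms(1) by (simp_all add: field_simps)
  have "frame_coords L (\<gamma> t) (covacc L \<gamma> a b t)
      = (\<Sum>k\<in>{1..3}. (D k + N k) *\<^sub>R frame_coords L (\<gamma> t) (EL L k (\<gamma> t)))"
    by (simp add: covacc_def D_def N_def linear_sum[OF linear_frame_coords]
        linear_scale[OF linear_frame_coords])
  also have "\<dots> = (D 1 + N 1) *\<^sub>R vector [1, 0, 0] + (D 2 + N 2) *\<^sub>R vector [0, 1, 0]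
      + (D 3 + N 3) *\<^sub>R vector [0, 0, 1]"
    unfolding atLeastAtMost_1_3 by (simp add: frame_coords_EL[OF assms(1)])
  finally show ?thesis
    unfolding D N by (simp add: vec_eq_iff forall_3 algebra_simps)
qed

text \<open>The g_L-unit normal, i.e. the normalised gradient of u, in frame coordinates.\<close>

definition normal_coords :: "real \<Rightarrow> (pt \<Rightarrow> real) \<Rightarrow> pt \<Rightarrow> real ^ 3" where
  "normal_coords L u x = (1 / lLf L u x) *\<^sub>R vector [pf u x, qf u x, rf L u x]"

lemma pbar_qbar_sq: "lf u x \<noteq> 0 \<Longrightarrow> (pbar u x)\<^sup>2 + (qbar u x)\<^sup>2 = 1"
  by (simp add: pbar_def qbar_def lf_def power_divide add_divide_distrib[symmetric])

lemma lLf_pos: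
  assumes "lf u x \<noteq> 0"
  shows "lLf L u x > 0"
proof -
  have "(pf u x)\<^sup>2 + (qf u x)\<^sup>2 > 0"
    using assms by (simp add: lf_def sum_power2_gt_zero_iff)
  then show ?thesis
    by (simp add: lLf_def add_pos_nonneg)
qed

lemma rbarL_lf_sq: "lf u x \<noteq> 0 \<Longrightarrow> (rbarL L u x)\<^sup>2 + (lf u x / lLf L u x)\<^sup>2 = 1"
  using lLf_pos[of u x L]
  by (simp add: rbarL_def lf_def lLf_def power_divide add_divide_distrib[symmetric])

lemma frame_coords_e1: "frame_coords L x (e1 u x) = vector [qbar u x, - pbar u x, 0]"
  by (simp add: frame_coords_def e1_def)

lemma frame_coords_e2:
  "L > 0 \<Longrightarrow> frame_coords L x (e2 L u x)
     = vector [rbarL L u x * pbar u x, rbarL L u x * qbar u x, - (lf u x / lLf L u x)]"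
  by (simp add: frame_coords_def e2_def)

lemma normal_coords_eq:
  assumes "lf u x \<noteq> 0"
  shows "normal_coords L u x
     = vector [(lf u x / lLf L u x) * pbar u x, (lf u x / lLf L u x) * qbar u x, rbarL L u x]"
  using assms by (simp add: normal_coords_def pbar_def qbar_def rbarL_def vec_eq_iff forall_3)

lemma cross_frame_coords_e1_e2:
  assumes "L > 0" "lf u x \<noteq> 0"
  shows "frame_coords L x (e1 u x) \<times> frame_coords L x (e2 L u x) = normal_coords L u x"
proof -
  have "rbarL L u x * (qbar u x * qbar u x + pbar u x * pbar u x) = rbarL L u x"
    using pbar_qbar_sq[OF assms(2)] by (simp add: power2_eq_square add.commute)
  then show ?thesis
    by (simp add: frame_coords_e1 frame_coords_e2[OF assms(1)] normal_coords_eq[OF assms(2)]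
        cross3_def vec_eq_iff forall_3 algebra_simps)
qed

lemma gL_projT_JL:
  assumes "L > 0" "lf u x \<noteq> 0"
  shows "gL L x (projT L u x V) (JL L u x v)
     = normal_coords L u x \<bullet> (frame_coords L x v \<times> frame_coords L x V)"
proof -
  let ?c = "frame_coords L x"
  define E1 E2 where "E1 = ?c (e1 u x)" and "E2 = ?c (e2 L u x)"
  have gL_inner: "gL L x V W = ?c V \<bullet> ?c W" for V W
    using assms(1) by (simp add: gL_eq_inner_frame_coords)
  have "E1 \<bullet> E1 = 1"
    using pbar_qbar_sq[OF assms(2)]
    by (simp add: E1_def frame_coords_e1 inner_vec_def sum_3 power2_eq_square add.commute)
  moreover have "E2 \<bullet> E2 = 1"
  proof -
    have "E2 \<bullet> E2 = (rbarL L u x)\<^sup>2 * ((pbar u x)\<^sup>2 + (qbar u x)\<^sup>2) + (lf u x / lLf L u x)\<^sup>2"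
      by (simp add: E2_def frame_coords_e2[OF assms(1)] inner_vec_def sum_3 power2_eq_square
          algebra_simps)
    then show ?thesis
      using pbar_qbar_sq[OF assms(2)] rbarL_lf_sq[OF assms(2)] by simp
  qed
  moreover have "E1 \<bullet> E2 = 0"
    by (simp add: E1_def E2_def frame_coords_e1 frame_coords_e2[OF assms(1)] inner_vec_def sum_3)
  ultimately have "((?c V \<bullet> E1) *\<^sub>R E1 + (?c V \<bullet> E2) *\<^sub>R E2) \<bullet> ((?c v \<bullet> E1) *\<^sub>R E2 - (?c v \<bullet> E2) *\<^sub>R E1)
      = (E1 \<times> E2) \<bullet> (?c v \<times> ?c V)"
    by (rule inner_projection_rotation)
  then show ?thesis
    using cross_frame_coords_e1_e2[OF assms]
    by (simp add: gL_inner projT_def JL_def E1_def E2_def linear_add[OF linear_frame_coords]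
        linear_diff[OF linear_frame_coords] linear_scale[OF linear_frame_coords])
qed

lemma kLs_eq_triple_product:
  assumes "L > 0" "lf u (\<gamma> t) \<noteq> 0"
  shows "kLs L u \<gamma> a b t = normal_coords L u (\<gamma> t) \<bullet>
      (frame_coords L (\<gamma> t) (vel \<gamma> a b t) \<times> frame_coords L (\<gamma> t) (covacc L \<gamma> a b t))
      / norm (frame_coords L (\<gamma> t) (vel \<gamma> a b t)) ^ 3"
proof -
  have "sqrt (gL L (\<gamma> t) (vel \<gamma> a b t) (vel \<gamma> a b t))
      = norm (frame_coords L (\<gamma> t) (vel \<gamma> a b t))"
    using assms(1) by (simp add: gL_eq_inner_frame_coords norm_eq_sqrt_inner)
  then show ?thesis
    unfolding kLs_def gL_projT_JL[OF assms] by simp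
qed

lemma kLs_eq_frame_components:
  assumes "L > 0" "a < b" "t \<in> {a..b}" "lf u (\<gamma> t) \<noteq> 0"
    and "((\<lambda>s. om (\<gamma> s) (vel \<gamma> a b s)) has_vector_derivative w) (at t within {a..b})"
  defines "a1 \<equiv> om1 (\<gamma> t) (vel \<gamma> a b t)" and "a2 \<equiv> om2 (\<gamma> t) (vel \<gamma> a b t)"
    and "a3 \<equiv> om (\<gamma> t) (vel \<gamma> a b t)"
    and "d1 \<equiv> vector_derivative (\<lambda>s. om1 (\<gamma> s) (vel \<gamma> a b s)) (at t within {a..b})"
    and "d2 \<equiv> vector_derivative (\<lambda>s. om2 (\<gamma> s) (vel \<gamma> a b s)) (at t within {a..b})"
  shows "kLs L u \<gamma> a b t = normal_coords L u (\<gamma> t) \<bullet>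
      (vector [a1, a2, sqrt L * a3] \<times>
       vector [d1 + (L + 1) * a2 * a3, d2 - L * a1 * a3, sqrt L * w - a1 * a2 / sqrt L])
      / norm (vector [a1, a2, sqrt L * a3] :: real ^ 3) ^ 3"
  using kLs_eq_triple_product[where \<gamma> = \<gamma> and t = t, OF assms(1,4)]
    covacc_frame_coords[OF assms(1-3,5)]
  by (simp add: frame_coords_def a1_def a2_def a3_def d1_def d2_def)

lemma frechet_derivative_frame_expansion:
  assumes "u differentiable (at x)"
  shows "frechet_derivative u (at x) v
    = om1 x v * pf u x + om2 x v * qf u x + om x v * frechet_derivative u (at x) (X3 x)"
proof -
  have "linear (frechet_derivative u (at x))"
    using assms by (simp add: frechet_derivative_works has_derivative_linear)
  then show ?thesis
    by (subst frame_decomposition[of v x])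
      (simp add: linear_add linear_scale pf_def qf_def mult.commute)
qed

lemma C2_curve_differentiable:
  "C2_curve \<gamma> a b \<Longrightarrow> t \<in> {a..b} \<Longrightarrow> \<gamma> differentiable (at t within {a..b})"
  unfolding C2_curve_def by (auto intro: differentiableI_vector)

lemma C2_curve_om_vel_differentiable:
  assumes "C2_curve \<gamma> a b" "a < b" "t \<in> {a..b}"
  shows "(\<lambda>s. om (\<gamma> s) (vel \<gamma> a b s)) differentiable (at t within {a..b})"
proof -
  obtain v acc where v: "\<And>s. s \<in> {a..b} \<Longrightarrow> (\<gamma> has_vector_derivative v s) (at s within {a..b})"
    and acc: "\<And>s. s \<in> {a..b} \<Longrightarrow> (v has_vector_derivative acc s) (at s within {a..b})"
    using assms(1) unfolding C2_curve_def by blast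
  have component: "((\<lambda>s. f s $ i) has_real_derivative f' $ i) (at t within {a..b})"
    if "(f has_vector_derivative f') (at t within {a..b})" for f :: "real \<Rightarrow> pt" and f' i
    using bounded_linear.has_vector_derivative[OF bounded_linear_vec_nth that]
    by (simp add: has_real_derivative_iff_has_vector_derivative)
  define c :: real where "c = - (1 / sqrt 2)"
  have "om x w = c * (exp (- x $ 3) * w $ 1 + exp (x $ 3) * w $ 2)" for x w
    by (simp add: om_def c_def)
  then have D: "((\<lambda>s. om (\<gamma> s) (v s)) has_vector_derivative
      c * (exp (- \<gamma> t $ 3) * (acc t $ 1 - v t $ 3 * v t $ 1)
        + exp (\<gamma> t $ 3) * (acc t $ 2 + v t $ 3 * v t $ 2))) (at t within {a..b})"
    (is "(_ has_vector_derivative ?D) ?F")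
    using component[OF v[OF assms(3)]] component[OF acc[OF assms(3)]]
    unfolding has_real_derivative_iff_has_vector_derivative[symmetric]
    by (auto intro!: derivative_eq_intros simp: algebra_simps)
  have "vel \<gamma> a b s = v s" if "s \<in> {a..b}" for s
    using v[OF that] assms(2) that by (simp add: vel_def vector_derivative_within_closed_interval)
  then have "((\<lambda>s. om (\<gamma> s) (vel \<gamma> a b s)) has_vector_derivative ?D) ?F"
    by (intro has_vector_derivative_transform[OF assms(3) _ D]) simp
  then show ?thesis
    by (rule differentiableI_vector)
qed

lemma frechet_derivative_vel_eq_0:
  fixes u :: "pt \<Rightarrow> real"
  assumes "\<gamma> differentiable (at t within {a..b})" "a < b" "t \<in> {a..b}"
    and "u differentiable (at (\<gamma> t))" and "\<And>s. s \<in> {a..b} \<Longrightarrow> u (\<gamma> s) = 0"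
  shows "frechet_derivative u (at (\<gamma> t)) (vel \<gamma> a b t) = 0"
proof -
  let ?du = "frechet_derivative u (at (\<gamma> t))"
  have du: "(u has_derivative ?du) (at (\<gamma> t))"
    using assms(4) by (simp add: frechet_derivative_works)
  have "(\<gamma> has_derivative (\<lambda>h. h *\<^sub>R vel \<gamma> a b t)) (at t within {a..b})"
    using assms(1) by (simp add: vel_def vector_derivative_works has_vector_derivative_def)
  from diff_chain_within[OF this has_derivative_at_withinI[OF du]]
  have chain: "((u \<circ> \<gamma>) has_vector_derivative ?du (vel \<gamma> a b t)) (at t within {a..b})"
    unfolding has_vector_derivative_def
    by (rule has_derivative_eq_rhs) (simp add: fun_eq_iff linear_scale[OF has_derivative_linear[OF du]])
  have const: "((u \<circ> \<gamma>) has_vector_derivative 0) (at t within {a..b})"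
    using assms(3,5)
    by (auto intro: has_vector_derivative_transform[OF _ _ has_vector_derivative_const])
  show ?thesis
    using vector_derivative_within_closed_interval[OF assms(2,3) chain]
      vector_derivative_within_closed_interval[OF assms(2,3) const] by simp
qed

section \<open>The limit L to infinity\<close>

lemma tendsto_normal_coords:
  assumes "u differentiable (at x)" "lf u x \<noteq> 0"
  shows "((\<lambda>L. normal_coords L u x) \<longlongrightarrow> vector [pbar u x, qbar u x, 0]) at_top"
proof -
  define s where "s = frechet_derivative u (at x) (X3 x)"
  define N where "N e = (1 / sqrt ((pf u x)\<^sup>2 + (qf u x)\<^sup>2 + (s * e)\<^sup>2))
      *\<^sub>R (vector [pf u x, qf u x, s * e] :: real ^ 3)" for e
  have "linear (frechet_derivative u (at x))"
    using assms(1) by (simp add: frechet_derivative_works has_derivative_linear)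
  then have "normal_coords L u x = N (1 / sqrt L)" for L
    by (simp add: normal_coords_def lLf_def N_def rf_def s_def linear_scale)
  moreover have "((\<lambda>L. N (1 / sqrt L)) \<longlongrightarrow> N 0) at_top"
    unfolding N_def using assms(2)
    by (intro tendsto_intros tendsto_vector3 tendsto_inverse_sqrt_at_top) (simp_all add: lf_def)
  moreover have "N 0 = vector [pbar u x, qbar u x, 0]"
    by (simp add: N_def lf_def pbar_def qbar_def vec_eq_iff forall_3)
  ultimately show ?thesis
    by simp
qed

lemma kLs_tendsto_om_nonzero:
  assumes "a < b" "t \<in> {a..b}" "lf u (\<gamma> t) \<noteq> 0" "u differentiable (at (\<gamma> t))"
    and w: "((\<lambda>s. om (\<gamma> s) (vel \<gamma> a b s)) has_vector_derivative w) (at t within {a..b})"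
    and "om (\<gamma> t) (vel \<gamma> a b t) \<noteq> 0"
  defines "a1 \<equiv> om1 (\<gamma> t) (vel \<gamma> a b t)" and "a2 \<equiv> om2 (\<gamma> t) (vel \<gamma> a b t)"
    and "a3 \<equiv> om (\<gamma> t) (vel \<gamma> a b t)"
  shows "((\<lambda>L. kLs L u \<gamma> a b t) \<longlongrightarrow> (pbar u (\<gamma> t) * a1 + qbar u (\<gamma> t) * a2) / \<bar>a3\<bar>) at_top"
proof -
  define d1 where "d1 = vector_derivative (\<lambda>s. om1 (\<gamma> s) (vel \<gamma> a b s)) (at t within {a..b})"
  define d2 where "d2 = vector_derivative (\<lambda>s. om2 (\<gamma> s) (vel \<gamma> a b s)) (at t within {a..b})"
  define e :: "real \<Rightarrow> real" where "e L = 1 / sqrt L" for L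
  define v :: "real \<Rightarrow> real ^ 3" where "v L = vector [a1 * e L, a2 * e L, a3]" for L
  define V :: "real \<Rightarrow> real ^ 3" where "V L = vector [d1 * (e L)\<^sup>2 + (1 + (e L)\<^sup>2) * a2 * a3,
      d2 * (e L)\<^sup>2 - a1 * a3, w * e L - a1 * a2 * (e L) ^ 3]" for L
  have rescaled: "kLs L u \<gamma> a b t = normal_coords L u (\<gamma> t) \<bullet> (v L \<times> V L) / norm (v L) ^ 3"
    if "L > 0" for L
  proof -
    have "vector [a1, a2, sqrt L * a3] = sqrt L *\<^sub>R v L"
      and "vector [d1 + (L + 1) * a2 * a3, d2 - L * a1 * a3, sqrt L * w - a1 * a2 / sqrt L]
        = (sqrt L)\<^sup>2 *\<^sub>R V L"
      using that by (simp_all add: v_def V_def e_def vec_eq_iff forall_3 field_simps power3_eq_cube)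
    then show ?thesis
      using kLs_eq_frame_components[OF that assms(1-3) w]
        triple_product_over_cube_scale[OF real_sqrt_gt_zero[OF that]] that
      by (simp add: a1_def a2_def a3_def d1_def d2_def)
  qed
  have ev: "\<forall>\<^sub>F L in at_top.
      normal_coords L u (\<gamma> t) \<bullet> (v L \<times> V L) / norm (v L) ^ 3 = kLs L u \<gamma> a b t"
    using eventually_gt_at_top[of "0::real"] by (rule eventually_mono) (simp add: rescaled)
  have "(e \<longlongrightarrow> 0) at_top"
    using tendsto_inverse_sqrt_at_top by (simp add: e_def[abs_def])
  then have lim: "((\<lambda>L. normal_coords L u (\<gamma> t) \<bullet> (v L \<times> V L) / norm (v L) ^ 3)
      \<longlongrightarrow> vector [pbar u (\<gamma> t), qbar u (\<gamma> t), 0] \<bullet> (vector [0, 0, a3] \<times> vector [a2 * a3, - a1 * a3, 0])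
        / norm (vector [0, 0, a3] :: real ^ 3) ^ 3) at_top"
    unfolding v_def V_def using assms(6)
    by (intro tendsto_triple_product_over_cube tendsto_normal_coords[OF assms(4,3)]
        tendsto_vector3 tendsto_eq_intros) (auto simp: a3_def vec_eq_iff forall_3)
  have limit_eq: "vector [pbar u (\<gamma> t), qbar u (\<gamma> t), 0] \<bullet> (vector [0, 0, a3] \<times> vector [a2 * a3, - a1 * a3, 0])
        / norm (vector [0, 0, a3] :: real ^ 3) ^ 3 = (pbar u (\<gamma> t) * a1 + qbar u (\<gamma> t) * a2) / \<bar>a3\<bar>"
    using assms(6) unfolding norm_vector_3
    by (simp add: cross3_def inner_vec_def sum_3 a3_def power3_eq_cube power2_eq_square field_simps)
  show ?thesis
    using Lim_transform_eventually[OF lim ev] unfolding limit_eq .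
qed

lemma kLs_tendsto_zero_om_deriv_zero:
  assumes "a < b" "t \<in> {a..b}" "lf u (\<gamma> t) \<noteq> 0" "u differentiable (at (\<gamma> t))"
    and w: "((\<lambda>s. om (\<gamma> s) (vel \<gamma> a b s)) has_vector_derivative 0) (at t within {a..b})"
    and om_0: "om (\<gamma> t) (vel \<gamma> a b t) = 0" and "vel \<gamma> a b t \<noteq> 0"
  shows "((\<lambda>L. kLs L u \<gamma> a b t) \<longlongrightarrow> 0) at_top"
proof -
  define a1 where "a1 = om1 (\<gamma> t) (vel \<gamma> a b t)"
  define a2 where "a2 = om2 (\<gamma> t) (vel \<gamma> a b t)"
  define d1 where "d1 = vector_derivative (\<lambda>s. om1 (\<gamma> s) (vel \<gamma> a b s)) (at t within {a..b})"
  define d2 where "d2 = vector_derivative (\<lambda>s. om2 (\<gamma> s) (vel \<gamma> a b s)) (at t within {a..b})"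
  define v :: "real ^ 3" where "v = vector [a1, a2, 0]"
  define V :: "real \<Rightarrow> real ^ 3" where "V L = vector [d1, d2, - a1 * a2 * (1 / sqrt L)]" for L
  have rescaled: "kLs L u \<gamma> a b t = normal_coords L u (\<gamma> t) \<bullet> (v \<times> V L) / norm v ^ 3"
    if "L > 0" for L
    using kLs_eq_frame_components[OF that assms(1-3) w] om_0
    by (simp add: v_def V_def a1_def a2_def d1_def d2_def)
  have ev: "\<forall>\<^sub>F L in at_top.
      normal_coords L u (\<gamma> t) \<bullet> (v \<times> V L) / norm v ^ 3 = kLs L u \<gamma> a b t"
    using eventually_gt_at_top[of "0::real"] by (rule eventually_mono) (simp add: rescaled)
  have "v \<noteq> 0"
    using coframe_eq_0_imp_eq_0 assms(7) om_0 by (auto simp: v_def a1_def a2_def vec_eq_iff forall_3)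
  then have lim: "((\<lambda>L. normal_coords L u (\<gamma> t) \<bullet> (v \<times> V L) / norm v ^ 3)
      \<longlongrightarrow> vector [pbar u (\<gamma> t), qbar u (\<gamma> t), 0] \<bullet> (v \<times> vector [d1, d2, - a1 * a2 * 0])
        / norm v ^ 3) at_top"
    unfolding V_def
    by (intro tendsto_triple_product_over_cube tendsto_normal_coords[OF assms(4,3)]
        tendsto_vector3 tendsto_intros tendsto_inverse_sqrt_at_top)
  have limit_eq: "vector [pbar u (\<gamma> t), qbar u (\<gamma> t), 0] \<bullet> (v \<times> vector [d1, d2, - a1 * a2 * 0]) = 0"
    by (simp add: v_def cross3_def inner_vec_def sum_3)
  show ?thesis
    using Lim_transform_eventually[OF lim ev] unfolding limit_eq by simp
qed

lemma kLs_div_sqrt_tendsto_om_zero: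
  assumes "a < b" "t \<in> {a..b}" "lf u (\<gamma> t) \<noteq> 0" "u differentiable (at (\<gamma> t))"
    and w: "((\<lambda>s. om (\<gamma> s) (vel \<gamma> a b s)) has_vector_derivative w) (at t within {a..b})"
    and om_0: "om (\<gamma> t) (vel \<gamma> a b t) = 0" and "vel \<gamma> a b t \<noteq> 0"
    and tangent: "frechet_derivative u (at (\<gamma> t)) (vel \<gamma> a b t) = 0"
  defines "a1 \<equiv> om1 (\<gamma> t) (vel \<gamma> a b t)" and "a2 \<equiv> om2 (\<gamma> t) (vel \<gamma> a b t)"
  shows "((\<lambda>L. kLs L u \<gamma> a b t / sqrt L) \<longlongrightarrow>
      (pbar u (\<gamma> t) * a2 - qbar u (\<gamma> t) * a1) * w
        / \<bar>qbar u (\<gamma> t) * a1 - pbar u (\<gamma> t) * a2\<bar> ^ 3) at_top"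
proof -
  define pb qb where "pb = pbar u (\<gamma> t)" and "qb = qbar u (\<gamma> t)"
  define d1 where "d1 = vector_derivative (\<lambda>s. om1 (\<gamma> s) (vel \<gamma> a b s)) (at t within {a..b})"
  define d2 where "d2 = vector_derivative (\<lambda>s. om2 (\<gamma> s) (vel \<gamma> a b s)) (at t within {a..b})"
  define v :: "real ^ 3" where "v = vector [a1, a2, 0]"
  define V :: "real \<Rightarrow> real ^ 3"
    where "V L = vector [d1 * (1 / sqrt L), d2 * (1 / sqrt L), w - a1 * a2 * (1 / sqrt L)\<^sup>2]" for L
  have rescaled: "kLs L u \<gamma> a b t / sqrt L = normal_coords L u (\<gamma> t) \<bullet> (v \<times> V L) / norm v ^ 3"
    if "L > 0" for L
  proof -
    have "vector [d1, d2, sqrt L * w - a1 * a2 / sqrt L] = sqrt L *\<^sub>R V L"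
      using that by (simp add: V_def vec_eq_iff forall_3 field_simps power2_eq_square)
    then show ?thesis
      using kLs_eq_frame_components[OF that assms(1-3) w] om_0 that
      by (simp add: v_def a1_def a2_def d1_def d2_def cross_mult_right)
  qed
  have ev: "\<forall>\<^sub>F L in at_top.
      normal_coords L u (\<gamma> t) \<bullet> (v \<times> V L) / norm v ^ 3 = kLs L u \<gamma> a b t / sqrt L"
    using eventually_gt_at_top[of "0::real"] by (rule eventually_mono) (simp add: rescaled)
  have "v \<noteq> 0"
    using coframe_eq_0_imp_eq_0 assms(7) om_0 by (auto simp: v_def a1_def a2_def vec_eq_iff forall_3)
  then have lim: "((\<lambda>L. normal_coords L u (\<gamma> t) \<bullet> (v \<times> V L) / norm v ^ 3)
      \<longlongrightarrow> vector [pb, qb, 0] \<bullet> (v \<times> vector [d1 * 0, d2 * 0, w - a1 * a2 * 0\<^sup>2]) / norm v ^ 3) at_top"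
    unfolding V_def pb_def qb_def
    by (intro tendsto_triple_product_over_cube tendsto_normal_coords[OF assms(4,3)]
        tendsto_vector3 tendsto_intros tendsto_inverse_sqrt_at_top)
  have "norm v = \<bar>qb * a1 - pb * a2\<bar>"
  proof -
    have "pb * a1 + qb * a2 = 0"
      using frechet_derivative_frame_expansion[OF assms(4), of "vel \<gamma> a b t"] tangent om_0 assms(3)
      by (simp add: pb_def qb_def pbar_def qbar_def a1_def a2_def field_simps)
    then have "a1\<^sup>2 + a2\<^sup>2 = ((pb)\<^sup>2 + (qb)\<^sup>2) * (a1\<^sup>2 + a2\<^sup>2) - (pb * a1 + qb * a2)\<^sup>2"
      using pbar_qbar_sq[OF assms(3)] by (simp add: pb_def qb_def)
    also have "\<dots> = (qb * a1 - pb * a2)\<^sup>2"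
      by (simp add: power2_eq_square algebra_simps)
    finally show ?thesis
      by (simp add: v_def norm_vector_3)
  qed
  then have limit_eq: "vector [pb, qb, 0] \<bullet> (v \<times> vector [d1 * 0, d2 * 0, w - a1 * a2 * 0\<^sup>2]) / norm v ^ 3
      = (pb * a2 - qb * a1) * w / \<bar>qb * a1 - pb * a2\<bar> ^ 3"
    by (simp add: v_def cross3_def inner_vec_def sum_3 algebra_simps)
  show ?thesis
    using Lim_transform_eventually[OF lim ev] limit_eq by (simp add: pb_def qb_def)
qed

theorem lemma6p2:
  fixes u :: "real ^ 3 \<Rightarrow> real" and \<gamma> :: "real \<Rightarrow> real ^ 3" and a b t :: real
  assumes u_C2: "C2_fun u"
    and compact_surf: "compact {x. u x = 0}"
    and grad_nz: "\<And>x. u x = 0 \<Longrightarrow> egrad u x \<noteq> 0"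
    and ab: "a < b"
    and gamma_C2: "C2_curve \<gamma> a b"
    and gamma_reg: "\<And>s. s \<in> {a..b} \<Longrightarrow> vel \<gamma> a b s \<noteq> 0"
    and gamma_on: "\<And>s. s \<in> {a..b} \<Longrightarrow> u (\<gamma> s) = 0"
    and t_in: "t \<in> {a..b}"
    and noncharact: "lf u (\<gamma> t) \<noteq> 0"
  defines "B \<equiv> - exp (- (\<gamma> t)$3) * (vel \<gamma> a b t)$1 + exp ((\<gamma> t)$3) * (vel \<gamma> a b t)$2"
    and "W \<equiv> \<lambda>s. - (sqrt 2 / 2) * (exp (- (\<gamma> s)$3) * (vel \<gamma> a b s)$1
                                   + exp ((\<gamma> s)$3) * (vel \<gamma> a b s)$2)"
    and "W' \<equiv> vector_derivative (\<lambda>s. - (sqrt 2 / 2) * (exp (- (\<gamma> s)$3) * (vel \<gamma> a b s)$1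
                                   + exp ((\<gamma> s)$3) * (vel \<gamma> a b s)$2)) (at t within {a..b})"
    and "pb \<equiv> pbar u (\<gamma> t)" and "qb \<equiv> qbar u (\<gamma> t)"
  shows
    "(W t \<noteq> 0 \<longrightarrow>
        ((\<lambda>L. kLs L u \<gamma> a b t) \<longlongrightarrow>
           (pb * (vel \<gamma> a b t)$3 + (sqrt 2 / 2) * qb * B) / \<bar>W t\<bar>) at_top)
     \<and> (W t = 0 \<and> W' = 0 \<longrightarrow> ((\<lambda>L. kLs L u \<gamma> a b t) \<longlongrightarrow> 0) at_top)
     \<and> (W t = 0 \<and> W' \<noteq> 0 \<longrightarrow>
        ((\<lambda>L. kLs L u \<gamma> a b t / sqrt L) \<longlongrightarrow>
           ((- qb * (vel \<gamma> a b t)$3 + (sqrt 2 / 2) * pb * B) * W')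
             / \<bar>qb * (vel \<gamma> a b t)$3 - (sqrt 2 / 2) * pb * B\<bar> ^ 3) at_top)"
proof -
  have u_diff: "u differentiable (at (\<gamma> t))"
    using u_C2 by (simp add: C2_fun_def)
  have sqrt_2_div_2: "sqrt 2 / 2 = 1 / sqrt (2 :: real)"
    by (simp add: field_simps)
  have W_om: "W = (\<lambda>s. om (\<gamma> s) (vel \<gamma> a b s))"
    by (simp add: W_def om_def fun_eq_iff sqrt_2_div_2)
  have W_deriv: "((\<lambda>s. om (\<gamma> s) (vel \<gamma> a b s)) has_vector_derivative W') (at t within {a..b})"
    using C2_curve_om_vel_differentiable[OF gamma_C2 ab t_in]
    unfolding W'_def W_def[symmetric] W_om by (simp add: vector_derivative_works)
  have tangent: "frechet_derivative u (at (\<gamma> t)) (vel \<gamma> a b t) = 0"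
    using frechet_derivative_vel_eq_0[OF C2_curve_differentiable[OF gamma_C2 t_in] ab t_in u_diff]
      gamma_on by blast
  have coords: "om1 (\<gamma> t) (vel \<gamma> a b t) = vel \<gamma> a b t $ 3"
      "om2 (\<gamma> t) (vel \<gamma> a b t) = sqrt 2 / 2 * B"
    by (simp_all add: om1_def om2_def B_def sqrt_2_div_2)
  show ?thesis
    using kLs_tendsto_om_nonzero[OF ab t_in noncharact u_diff W_deriv]
      kLs_tendsto_zero_om_deriv_zero[OF ab t_in noncharact u_diff _ _ gamma_reg[OF t_in]]
      kLs_div_sqrt_tendsto_om_zero[OF ab t_in noncharact u_diff W_deriv _ gamma_reg[OF t_in] tangent]
      W_deriv
    unfolding W_om coords pb_def[symmetric] qb_def[symmetric]
    by (auto simp: ac_simps)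
qed

end
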